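(* Let $P\subset\mathbb R^n$ be a bounded open convex set and let $\phi\in L^1(P)$ be convex. Suppose there exists $y\in\overline P$ such that $$P^\phi_a:=\{x\in P:\phi(x)<a\}=\frac{1-an}{1+n}\,y+\frac{na+n}{1+n}\,P\qquad\text{for every } -1<a<\tfrac1n .$$ Then $\int_P\phi\,d\mu=0$ and $\phi\in\mathcal W(P)$.
   Context: $\mu$ denotes Lebesgue measure on $\mathbb R^n$. A convex function $f:P\to\mathbb R$ is identified with its lower semicontinuous extension $f:\overline P\to(-\infty,\infty]$, which is convex. The set of extremizers is $$\mathcal W(P):=\Big\{\psi:P\to\mathbb R\text{ convex}:\ \int_P\psi\,d\mu=0,\ -\frac{2}{n+1}\Big(\frac{n}{n+1}\Big)^n\inf_P\psi=\frac{1}{\mu(P)}\int_P|\psi|\,d\mu\Big\}.$$ For sets $A\subset\mathbb R^n$, $y\in\mathbb R^n$ and scalars $s,r$, $s\,y+rA=\{sy+ra:a\in A\}$. *)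

theory Defs
  imports "HOL-Analysis.Analysis"
begin

text \<open>Here n = DIM('a), mu = Lebesgue measure,
  integrals over P are Lebesgue integrals (absolutely integrable functions,
  Henstock-Kurzweil integral coincides), and inf_P psi = Inf (psi ` P).\<close>
definition extremizers :: "'a::euclidean_space set \<Rightarrow> ('a \<Rightarrow> real) set" where
  "extremizers P = {\<psi>. convex_on P \<psi> \<and> \<psi> absolutely_integrable_on P \<and>
      integral P \<psi> = 0 \<and>
      - (2 / (real DIM('a) + 1)) * (real DIM('a) / (real DIM('a) + 1)) ^ DIM('a) * Inf (\<psi> ` P)
        = (1 / measure lebesgue P) * integral P (\<lambda>x. \<bar>\<psi> x\<bar>)}"

end

theory Submission
  imports Defs
begin

text \<open>The hypothesis says that the sublevel sets of \<phi> are the homothetic copies of P with centre y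
  and ratio s = n(a+1)/(n+1). They shrink to y as a \<rightarrow> -1 and exhaust P as a \<rightarrow> 1/n, so
  -1 \<le> \<phi> < 1/n on P with infimum -1, and \<mu>{\<phi> < a} = s^n \<mu>(P). The layer cake formula then gives
  \<integral>(1/n - \<phi>) = \<mu>(P)/n, i.e. \<integral>\<phi> = 0, and \<integral>max 0 (-\<phi>) = \<mu>(P) (n/(n+1))^n/(n+1), which is half of
  \<integral>|\<phi>| because \<integral>\<phi> = 0.\<close>

lemma nn_integral_layer_cake:
  fixes f :: "'b \<Rightarrow> real"
  assumes "sigma_finite_measure M" and [measurable]: "f \<in> borel_measurable M"
  shows "(\<integral>\<^sup>+x. ennreal (f x) \<partial>M) =
    (\<integral>\<^sup>+t. emeasure M {x \<in> space M. t < f x} * indicator {0<..} t \<partial>lborel)"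
proof -
  interpret pair_sigma_finite M lborel
    using assms(1) by (simp add: pair_sigma_finite_def sigma_finite_lborel)
  have "case_prod (\<lambda>x t. indicator {0<..<f x} t :: ennreal) p =
      indicator {p \<in> space (M \<Otimes>\<^sub>M lborel). 0 < snd p \<and> snd p < f (fst p)} p"
    if "p \<in> space (M \<Otimes>\<^sub>M lborel)" for p
    using that by (cases p) (simp add: indicator_def)
  moreover have "{p \<in> space (M \<Otimes>\<^sub>M lborel). 0 < snd p \<and> snd p < f (fst p)} \<in> sets (M \<Otimes>\<^sub>M lborel)"
    by measurable
  ultimately have meas: "case_prod (\<lambda>x t. indicator {0<..<f x} t :: ennreal) \<in> borel_measurable (M \<Otimes>\<^sub>M lborel)"
    by (subst measurable_cong) auto
  have "(\<integral>\<^sup>+x. ennreal (f x) \<partial>M) = (\<integral>\<^sup>+x. (\<integral>\<^sup>+t. indicator {0<..<f x} t \<partial>lborel) \<partial>M)"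
  proof (intro nn_integral_cong)
    show "ennreal (f x) = (\<integral>\<^sup>+t. indicator {0<..<f x} t \<partial>lborel)" for x
      by (cases "0 \<le> f x") (simp_all add: ennreal_neg)
  qed
  also have "\<dots> = (\<integral>\<^sup>+t. (\<integral>\<^sup>+x. indicator {0<..<f x} t \<partial>M) \<partial>lborel)"
    by (rule Fubini'[OF meas, symmetric])
  also have "\<dots> = (\<integral>\<^sup>+t. emeasure M {x \<in> space M. t < f x} * indicator {0<..} t \<partial>lborel)"
  proof (intro nn_integral_cong)
    fix t :: real
    have "(\<integral>\<^sup>+x. indicator {0<..<f x} t \<partial>M) =
        (\<integral>\<^sup>+x. indicator {x \<in> space M. t < f x} x * indicator {0<..} t \<partial>M)"
      by (intro nn_integral_cong) (auto simp: indicator_def)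
    also have "\<dots> = emeasure M {x \<in> space M. t < f x} * indicator {0<..} t"
      by (simp add: nn_integral_multc)
    finally show "(\<integral>\<^sup>+x. indicator {0<..<f x} t \<partial>M) = \<dots>" .
  qed
  finally show ?thesis .
qed

lemma has_integral_power_reflected:
  fixes c :: real
  assumes "0 \<le> c"
  shows "((\<lambda>t. (c - t) ^ n) has_integral c ^ Suc n / Suc n) {0..c}"
proof -
  define F :: "real \<Rightarrow> real" where "F t = - ((c - t) ^ Suc n) / Suc n" for t
  have "((\<lambda>t. (c - t) ^ n) has_integral F c - F 0) {0..c}"
  proof (intro fundamental_theorem_of_calculus assms)
    show "(F has_vector_derivative (c - t) ^ n) (at t within {0..c})" for t
      unfolding F_def has_real_derivative_iff_has_vector_derivative[symmetric]
      by (rule derivative_eq_intros refl)+ (cases n, simp_all del: of_nat_Suc)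
  qed
  then show ?thesis by (simp add: F_def)
qed

locale homothetic_sublevels =
  fixes P :: "'a::euclidean_space set" and \<phi> :: "'a \<Rightarrow> real" and y :: 'a and n :: nat
  defines n_def: "n \<equiv> DIM('a)"
  assumes bounded_P: "bounded P" and open_P: "open P" and P_nonempty: "P \<noteq> {}"
    and continuous_on_phi: "continuous_on P \<phi>"
    and sublevel_homothety: "\<And>a. -1 < a \<Longrightarrow> a < 1 / real n \<Longrightarrow> {x \<in> P. \<phi> x < a} =
      (\<lambda>p. ((1 - a * real n) / (1 + real n)) *\<^sub>R y + ((real n * a + real n) / (1 + real n)) *\<^sub>R p) ` P"
begin

lemma n_pos: "0 < n"
  by (simp add: n_def)

lemma scaled_level_less:
  fixes s :: real
  assumes "s < 1"
  shows "s * (n + 1) / n - 1 < 1 / n"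
proof -
  have "s * (n + 1) / n - 1 - 1 / n = (s - 1) * (n + 1) / n"
    using n_pos by (simp add: field_simps)
  moreover have "(s - 1) * (n + 1) / n < 0"
    using assms n_pos by (simp add: divide_neg_pos mult_neg_pos)
  ultimately show ?thesis
    by linarith
qed

lemma sublevel_scaled:
  fixes s :: real
  assumes "0 < s" "s < 1"
  shows "{x \<in> P. \<phi> x < s * (n + 1) / n - 1} = (\<lambda>p. (1 - s) *\<^sub>R y + s *\<^sub>R p) ` P"
proof -
  define a where "a = s * (n + 1) / n - 1"
  have "a * n = s * (n + 1) - n"
    using n_pos by (simp add: a_def field_simps)
  then have "(1 - a * n) / (1 + n) = 1 - s" "(n * a + n) / (1 + n) = s"
    by (simp_all add: field_simps)
  moreover have "-1 < a" "a < 1 / n"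
    using assms n_pos scaled_level_less by (simp_all add: a_def)
  ultimately show ?thesis
    using sublevel_homothety by (simp add: a_def)
qed

lemma phi_less_inverse_dim:
  assumes "x \<in> P"
  shows "\<phi> x < 1 / n"
proof -
  have "((\<lambda>s. y + inverse s *\<^sub>R (x - y)) \<longlongrightarrow> y + inverse 1 *\<^sub>R (x - y)) (at_left 1)"
    by (intro tendsto_intros) auto
  then have "\<forall>\<^sub>F s in at_left 1. y + inverse s *\<^sub>R (x - y) \<in> P"
    using open_P assms by (auto elim: topological_tendstoD)
  moreover have "\<forall>\<^sub>F s in at_left (1::real). s \<in> {0<..<1}"
    by (rule eventually_at_left_real) simp
  ultimately have "\<forall>\<^sub>F s in at_left (1::real). s \<in> {0<..<1} \<and> y + inverse s *\<^sub>R (x - y) \<in> P"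
    by (simp add: eventually_conj_iff)
  then obtain s :: real where s: "s \<in> {0<..<1}" "y + inverse s *\<^sub>R (x - y) \<in> P"
    using eventually_happens'[OF trivial_limit_at_left_real] by blast
  then have s: "0 < s" "s < 1" "y + inverse s *\<^sub>R (x - y) \<in> P"
    by simp_all
  then have "x = (1 - s) *\<^sub>R y + s *\<^sub>R (y + inverse s *\<^sub>R (x - y))"
    by (simp add: algebra_simps)
  then have "\<phi> x < s * (n + 1) / n - 1"
    using sublevel_scaled[OF s(1,2)] s(3) assms by blast
  also have "\<dots> < 1 / n"
    using s(2) by (rule scaled_level_less)
  finally show ?thesis .
qed

lemma open_sublevel: "open {x \<in> P. \<phi> x < a}"
proof -
  have "{x \<in> P. \<phi> x < a} = P \<inter> \<phi> -` {..<a}"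
    by auto
  then show ?thesis
    using continuous_open_preimage[OF continuous_on_phi open_P, of "{..<a}"] by simp
qed

lemma phi_ge_minus_one:
  assumes "x \<in> P"
  shows "-1 \<le> \<phi> x"
proof -
  obtain R where R: "\<And>p. p \<in> P \<Longrightarrow> norm p \<le> R"
    using bounded_P by (auto simp: bounded_iff)
  have "{x \<in> P. \<phi> x < -1} \<subseteq> {y}"
  proof
    fix x assume x: "x \<in> {x \<in> P. \<phi> x < -1}"
    have "norm (x - y) \<le> s * (R + norm y)" if s: "0 < s" "s < 1" for s :: real
    proof -
      have "0 < s * (n + 1) / n"
        using s n_pos by simp
      then have "x \<in> {x \<in> P. \<phi> x < s * (n + 1) / n - 1}"
        using x by simp
      then obtain p where p: "p \<in> P" "x = (1 - s) *\<^sub>R y + s *\<^sub>R p"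
        using sublevel_scaled[OF s] by auto
      then have "x - y = s *\<^sub>R (p - y)"
        by (simp add: algebra_simps)
      then have "norm (x - y) = s * norm (p - y)"
        using s by simp
      also have "\<dots> \<le> s * (R + norm y)"
        using s R[OF p(1)] norm_triangle_ineq4[of p y] by (simp add: mult_left_mono)
      finally show ?thesis .
    qed
    then have "\<forall>\<^sub>F s in at_right 0. norm (x - y) \<le> s * (R + norm y)"
      using eventually_at_right_real[of 0 1] by (auto elim: eventually_mono)
    moreover have "((\<lambda>s. s * (R + norm y)) \<longlongrightarrow> 0 * (R + norm y)) (at_right 0)"
      by (intro tendsto_intros)
    ultimately have "norm (x - y) \<le> 0 * (R + norm y)"
      using tendsto_lowerbound trivial_limit_at_right_real by blast
    then show "x \<in> {y}"
      by simp
  qed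
  then have "{x \<in> P. \<phi> x < -1} = {}"
    using open_sublevel[of "-1"] not_open_singleton subset_singleton_iff by metis
  then show ?thesis
    using assms by (auto simp: not_le)
qed

lemma emeasure_sublevel:
  fixes a :: real
  assumes "a < 1 / n"
  shows "emeasure lborel {x \<in> P. \<phi> x < a} =
    ennreal ((n * max 0 (a + 1) / (n + 1)) ^ n * measure lebesgue P)"
proof (cases "-1 < a")
  case True
  define r :: real where "r = n * (a + 1) / (n + 1)"
  have r_pos: "0 < r"
    using True n_pos by (simp add: r_def)
  have "{x \<in> P. \<phi> x < a} = (\<lambda>x. r *\<^sub>R x + ((1 - a * n) / (1 + n)) *\<^sub>R y) ` P"
    using sublevel_homothety[OF True assms] by (simp add: r_def algebra_simps add.commute)
  then have "emeasure lebesgue {x \<in> P. \<phi> x < a} = ennreal (r ^ n) * emeasure lebesgue P"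
    using r_pos by (simp add: emeasure_lebesgue_affine n_def)
  moreover have "emeasure lebesgue P = ennreal (measure lebesgue P)"
    using lmeasurable_open[OF bounded_P open_P] by (simp add: emeasure_eq_measure2 fmeasurableD2)
  moreover have "{x \<in> P. \<phi> x < a} \<in> sets borel"
    using open_sublevel by simp
  ultimately show ?thesis
    using True r_pos by (simp add: r_def ennreal_mult)
next
  case False
  then have empty: "{x \<in> P. \<phi> x < a} = {}"
    using phi_ge_minus_one by force
  have "max 0 (a + 1) = 0"
    using False by simp
  then show ?thesis
    unfolding empty using n_pos by simp
qed

lemma has_integral_max_0_diff:
  fixes b :: real
  assumes "-1 < b" "b \<le> 1 / n"
  shows "((\<lambda>x. max 0 (b - \<phi> x)) has_integral
    (n / (n + 1)) ^ n * (b + 1) ^ Suc n / (n + 1) * measure lebesgue P) P"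
proof -
  define f where "f x = indicator P x *\<^sub>R max 0 (b - \<phi> x)" for x
  define g where "g t = (n / (n + 1)) ^ n * measure lebesgue P * (b + 1 - t) ^ n" for t
  define I where "I = (n / (n + 1)) ^ n * (b + 1) ^ Suc n / (n + 1) * measure lebesgue P"
  have f_measurable: "f \<in> borel_measurable borel"
    unfolding f_def[abs_def] using open_P
    by (intro borel_measurable_continuous_on_indicator continuous_intros continuous_on_phi) auto
  have f_nonneg: "0 \<le> f x" for x
    by (simp add: f_def)
  have distribution: "emeasure lborel {x. t < f x} * indicator {0<..} t =
      ennreal (g t) * indicator {0..b + 1} t" if "t \<noteq> 0" for t
  proof (cases "0 < t")
    case True
    have "{x. t < f x} = {x \<in> P. \<phi> x < b - t}"
      using True by (auto simp: f_def indicator_def)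
    moreover have "b - t < 1 / n"
      using True assms(2) by linarith
    moreover have "(n * max 0 (b - t + 1) / (n + 1)) ^ n = (n / (n + 1)) ^ n * (b + 1 - t) ^ n"
      if "t \<le> b + 1"
      using that by (simp add: power_mult_distrib power_divide diff_add_eq)
    ultimately show ?thesis
      using True n_pos emeasure_sublevel[of "b - t"] by (auto simp: g_def indicator_def mult.commute)
  qed (use that in \<open>simp add: indicator_def\<close>)
  have "(g has_integral (n / (n + 1)) ^ n * measure lebesgue P * ((b + 1) ^ Suc n / Suc n)) {0..b + 1}"
    unfolding g_def using assms(1)
    by (intro has_integral_mult_right has_integral_power_reflected) simp
  then have g_integral: "(g has_integral I) {0..b + 1}"
    by (simp add: I_def add.commute mult_ac)
  have "(\<integral>\<^sup>+x. f x \<partial>lborel) = (\<integral>\<^sup>+t. emeasure lborel {x. t < f x} * indicator {0<..} t \<partial>lborel)"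
    using nn_integral_layer_cake[OF sigma_finite_lborel, of f] f_measurable by simp
  also have "\<dots> = (\<integral>\<^sup>+t. ennreal (g t) * indicator {0..b + 1} t \<partial>lborel)"
    by (rule nn_integral_cong_AE) (use AE_lborel_singleton[of 0] distribution in auto)
  also have "\<dots> = ennreal I"
    by (rule nn_integral_has_integral_lebesgue'[OF _ g_integral]) (simp add: g_def)
  finally have "(f has_integral I) UNIV"
    using f_measurable f_nonneg assms(1) by (intro nn_integral_has_integral) (auto simp: I_def)
  moreover have "f = (\<lambda>x. if x \<in> P then max 0 (b - \<phi> x) else 0)"
    by (simp add: fun_eq_iff f_def indicator_def)
  ultimately show ?thesis
    by (simp add: I_def has_integral_restrict_UNIV)
qed

lemma has_integral_one: "((\<lambda>x. 1) has_integral measure lebesgue P) P"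
proof -
  have "(indicator P has_integral measure lebesgue P) UNIV"
    using lmeasurable_open[OF bounded_P open_P] lmeasurable_iff_has_integral by blast
  moreover have "indicator P = (\<lambda>x. if x \<in> P then 1 else 0 :: real)"
    by (simp add: fun_eq_iff indicator_def)
  ultimately show ?thesis
    by (simp add: has_integral_restrict_UNIV)
qed

lemma has_integral_zero: "(\<phi> has_integral 0) P"
proof -
  have "1 / n + 1 = (n + 1) / n"
    using n_pos by (simp add: field_simps)
  moreover have "(n / (n + 1)) ^ n * ((n + 1) / n) ^ n = (1::real)"
    using n_pos by (subst power_mult_distrib[symmetric]) simp
  ultimately have "(n / (n + 1)) ^ n * (1 / n + 1) ^ Suc n / (n + 1) = 1 / n"
    using n_pos by (simp add: power_Suc2 mult.assoc[symmetric])
  then have "((\<lambda>x. max 0 (1 / n - \<phi> x)) has_integral 1 / n * measure lebesgue P) P"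
    using has_integral_max_0_diff[of "1 / n"] by (simp add: less_le_trans[of _ 0])
  then have "((\<lambda>x. 1 / n - \<phi> x) has_integral 1 / n * measure lebesgue P) P"
    by (rule has_integral_eq[rotated]) (simp add: less_imp_le phi_less_inverse_dim)
  then have "((\<lambda>x. 1 / n - (1 / n - \<phi> x)) has_integral
      1 / n * measure lebesgue P - 1 / n * measure lebesgue P) P"
    using has_integral_mult_right[OF has_integral_one, of "1 / n"] by (intro has_integral_diff) simp_all
  then show ?thesis
    by simp
qed

lemma has_integral_abs:
  "((\<lambda>x. \<bar>\<phi> x\<bar>) has_integral 2 * (n / (n + 1)) ^ n / (n + 1) * measure lebesgue P) P"
proof -
  have "((\<lambda>x. 2 * max 0 (0 - \<phi> x) + \<phi> x) has_integral
      2 * ((n / (n + 1)) ^ n / (n + 1) * measure lebesgue P) + 0) P"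
    using has_integral_max_0_diff[of 0] n_pos
    by (intro has_integral_add has_integral_mult_right has_integral_zero) simp_all
  moreover have "2 * max 0 (0 - \<phi> x) + \<phi> x = \<bar>\<phi> x\<bar>" for x
    by (simp add: max_def abs_if)
  ultimately show ?thesis
    by (simp add: mult_ac)
qed

lemma Inf_image_phi: "Inf (\<phi> ` P) = -1"
proof (rule cInf_eq_non_empty)
  show "\<phi> ` P \<noteq> {}"
    using P_nonempty by simp
  show "\<And>v. v \<in> \<phi> ` P \<Longrightarrow> -1 \<le> v"
    using phi_ge_minus_one by auto
  fix z assume lower: "\<And>v. v \<in> \<phi> ` P \<Longrightarrow> z \<le> v"
  show "z \<le> -1"
  proof (rule ccontr)
    assume "\<not> z \<le> -1"
    moreover have "-1 < 1 / real n"
      by (simp add: less_le_trans[of _ 0])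
    ultimately obtain a where a: "-1 < a" "a < z" "a < 1 / n"
      using dense[of "-1" "min z (1 / n)"] by auto
    have "{x \<in> P. \<phi> x < a} \<noteq> {}"
      using sublevel_homothety[OF a(1,3)] P_nonempty by simp
    then show False
      using lower a(2) by fastforce
  qed
qed

lemma measure_P_pos: "0 < measure lebesgue P"
proof -
  obtain x r where "0 < r" "ball x r \<subseteq> P"
    using P_nonempty open_P open_contains_ball by blast
  then have "0 < measure lebesgue (ball x r)"
    using content_ball_pos by simp
  also have "\<dots> \<le> measure lebesgue P"
    using \<open>ball x r \<subseteq> P\<close> lmeasurable_open[OF bounded_P open_P]
    by (intro measure_mono_fmeasurable) auto
  finally show ?thesis .
qed

end

theorem proposition3p4:
  fixes P :: "'a::euclidean_space set" and \<phi> :: "'a \<Rightarrow> real" and y :: 'a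
  assumes "bounded P" and "open P" and "convex P" and "P \<noteq> {}"
    and "\<phi> absolutely_integrable_on P" and "convex_on P \<phi>"
    and "y \<in> closure P"
    and "\<forall>a::real. -1 < a \<and> a < 1 / real DIM('a) \<longrightarrow>
           {x \<in> P. \<phi> x < a} =
           (\<lambda>p. ((1 - a * real DIM('a)) / (1 + real DIM('a))) *\<^sub>R y
                 + ((real DIM('a) * a + real DIM('a)) / (1 + real DIM('a))) *\<^sub>R p) ` P"
  shows "integral P \<phi> = 0 \<and> \<phi> \<in> extremizers P"
proof -
  interpret homothetic_sublevels P \<phi> y "DIM('a)"
  proof unfold_locales
    show "continuous_on P \<phi>"
      by (rule convex_on_continuous[OF assms(2,6)])
  qed (use assms in simp_all)
  have "integral P \<phi> = 0"
    using has_integral_zero by blast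
  moreover have "- (2 / (real DIM('a) + 1)) * (real DIM('a) / (real DIM('a) + 1)) ^ DIM('a) * Inf (\<phi> ` P)
      = (1 / measure lebesgue P) * integral P (\<lambda>x. \<bar>\<phi> x\<bar>)"
    using Inf_image_phi integral_unique[OF has_integral_abs] measure_P_pos
    by (simp add: add.commute[of "real DIM('a)" 1])
  ultimately show ?thesis
    using assms(5,6) by (simp add: extremizers_def)
qed

end
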